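(* Let $\varepsilon>0$ and $x_0$ satisfy $0\le x_0<\tfrac14$ and $\dfrac{\varepsilon^2}{\frac14-\varepsilon^2x_0}<1$; let $\mathcal{C}(\theta)=\tfrac14-\varepsilon^2x_0-\varepsilon^2e^{2\pi i\theta}$, $q_c(z)=z^2+c$, and $\tilde\gamma(\theta)=\tfrac12+\varepsilon e^{2\pi i\theta}\sqrt{1+x_0e^{-4\pi i\theta}}$ (principal branch), $\theta\in\mathbb{T}^1$. Let $\alpha>0$. For each $\theta\in\mathbb{T}^1$ let $\tilde\ell_\theta$ be the affine map of $\mathbb{C}$ with $\tilde\ell_\theta(\tilde\gamma(\theta))=\tilde\gamma(\theta+\tfrac\alpha2)$ and $\tilde\ell_\theta(\tilde\gamma(\theta+\tfrac12))=\tilde\gamma(\theta+\tfrac12+\tfrac\alpha2)$, and define the fibred quadratic polynomial $$\widetilde Q(\theta,\zeta)=\big(\theta+\tfrac\alpha2,\ \tilde\ell_\theta\circ q_{\mathcal{C}(\langle2\theta\rangle)}(\zeta)\big).$$ Then $\tilde\gamma$ is an invariant curve for $\widetilde Q$, i.e. $\tilde\ell_\theta\big(q_{\mathcal{C}(\langle2\theta\rangle)}(\tilde\gamma(\theta))\big)=\tilde\gamma(\theta+\tfrac\alpha2)$ for all $\theta\in\mathbb{T}^1$.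
   Context: $\mathbb{T}^1=\mathbb{R}/\mathbb{Z}$, $\langle x\rangle$ is the fractional part of $x$. The affine map $\tilde\ell_\theta$ is the degree-one Lagrange interpolation polynomial through the two prescribed pairs of points (the points $\tilde\gamma(\theta)$ and $\tilde\gamma(\theta+\frac12)$ are distinct). *)

theory Defs
  imports "HOL-Analysis.Analysis"
begin

text \<open>The circle T^1 = R/Z is represented by real parameters; every function below is
  1-periodic in theta, so quantifying over all reals is the same as over T^1.\<close>

definition frac_part :: "real \<Rightarrow> real" where
  "frac_part x = x - of_int \<lfloor>x\<rfloor>"

definition Ccal :: "real \<Rightarrow> real \<Rightarrow> real \<Rightarrow> complex" where
  "Ccal eps x0 theta = 1/4 - of_real (eps^2 * x0) - of_real (eps^2) * cis (2 * pi * theta)"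

definition qpoly :: "complex \<Rightarrow> complex \<Rightarrow> complex" where
  "qpoly c z = z^2 + c"

definition gamma_t :: "real \<Rightarrow> real \<Rightarrow> real \<Rightarrow> complex" where
  "gamma_t eps x0 theta =
     1/2 + of_real eps * cis (2 * pi * theta) * csqrt (1 + of_real x0 * cis (- 4 * pi * theta))"

text \<open>Degree-one Lagrange interpolation: the affine map sending z1 to w1 and z2 to w2.\<close>
definition affine_interp :: "complex \<Rightarrow> complex \<Rightarrow> complex \<Rightarrow> complex \<Rightarrow> complex \<Rightarrow> complex" where
  "affine_interp z1 w1 z2 w2 z = w1 * (z - z2) / (z1 - z2) + w2 * (z - z1) / (z2 - z1)"

definition ell_t :: "real \<Rightarrow> real \<Rightarrow> real \<Rightarrow> real \<Rightarrow> complex \<Rightarrow> complex" where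
  "ell_t eps x0 alpha theta =
     affine_interp (gamma_t eps x0 theta) (gamma_t eps x0 (theta + alpha/2))
                   (gamma_t eps x0 (theta + 1/2)) (gamma_t eps x0 (theta + 1/2 + alpha/2))"

end

theory Submission
  imports Defs
begin

text \<open>Write gamma(theta) = 1/2 + u with u = eps e(theta) sqrt(1 + x0 e(-2 theta)), where
  e(t) = exp(2 pi i t). Then u^2 = eps^2 (e(2 theta) + x0) = 1/4 - C(2 theta), which says exactly
  that gamma(theta) is a fixed point of q_C(2 theta). Moreover gamma(theta + 1/2) = 1 - gamma(theta),
  which differs from gamma(theta), so the interpolating map sends gamma(theta) to gamma(theta + alpha/2).\<close>

lemma cis_2pi_frac_part: "cis (2 * pi * frac_part x) = cis (2 * pi * x)"
proof -
  have "2 * pi * frac_part x = 2 * pi * x - 2 * pi * of_int \<lfloor>x\<rfloor>"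
    by (simp add: frac_part_def algebra_simps)
  then show ?thesis
    by (simp add: cis_divide [symmetric])
qed

lemma Ccal_frac_part: "Ccal eps x0 (frac_part t) = Ccal eps x0 t"
  unfolding Ccal_def cis_2pi_frac_part ..

lemma qpoly_fixed_point_iff: "qpoly c (1/2 + u) = 1/2 + u \<longleftrightarrow> u^2 = 1/4 - c"
proof -
  have "qpoly c (1/2 + u) - (1/2 + u) = u^2 - (1/4 - c)"
    by (simp add: qpoly_def power2_eq_square field_simps)
  then show ?thesis
    by (metis eq_iff_diff_eq_0)
qed

lemma gamma_t_fixed_point:
  "qpoly (Ccal eps x0 (2 * theta)) (gamma_t eps x0 theta) = gamma_t eps x0 theta"
proof -
  define e where "e = cis (2 * pi * theta)"
  define u where "u = of_real eps * e * csqrt (1 + of_real x0 * cis (- 4 * pi * theta))"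
  have e_square: "e^2 = cis (2 * pi * (2 * theta))"
    unfolding e_def power2_eq_square cis_mult by (rule arg_cong [where f = cis]) simp
  have "e^2 * cis (- 4 * pi * theta) = 1"
    unfolding e_square cis_mult by simp
  then have "u^2 = of_real (eps^2) * (e^2 + of_real x0)"
    unfolding u_def by (simp add: power_mult_distrib algebra_simps)
  also have "\<dots> = 1/4 - Ccal eps x0 (2 * theta)"
    unfolding Ccal_def e_square by (simp add: algebra_simps)
  finally have "qpoly (Ccal eps x0 (2 * theta)) (1/2 + u) = 1/2 + u"
    using qpoly_fixed_point_iff by blast
  then show ?thesis
    unfolding gamma_t_def u_def e_def .
qed

lemma gamma_t_antipodal: "gamma_t eps x0 (theta + 1/2) = 1 - gamma_t eps x0 theta"
proof -
  have "cis (2 * pi * (theta + 1/2)) = - cis (2 * pi * theta)"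
    by (simp add: distrib_left cis_mult [symmetric])
  moreover have "cis (- 4 * pi * (theta + 1/2)) = cis (- 4 * pi * theta)"
  proof -
    have "- 4 * pi * (theta + 1/2) = - 4 * pi * theta - 2 * pi * of_int 1"
      by (simp add: algebra_simps)
    then show ?thesis
      by (simp add: cis_divide [symmetric])
  qed
  ultimately show ?thesis
    unfolding gamma_t_def by simp
qed

lemma gamma_t_ne_half:
  assumes "eps \<noteq> 0" and "\<bar>x0\<bar> < 1"
  shows "gamma_t eps x0 theta \<noteq> 1/2"
proof
  assume "gamma_t eps x0 theta = 1/2"
  with \<open>eps \<noteq> 0\<close> have "csqrt (1 + of_real x0 * cis (- 4 * pi * theta)) = 0"
    unfolding gamma_t_def by simp
  then have "of_real x0 * cis (- 4 * pi * theta) = -1"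
    by (metis add_eq_0_iff power2_csqrt power_zero_numeral)
  then have "\<bar>x0\<bar> = 1"
    by (metis norm_cis norm_minus_cancel norm_mult norm_of_real norm_one mult_1_right)
  with \<open>\<bar>x0\<bar> < 1\<close> show False
    by simp
qed

lemma affine_interp_first:
  assumes "z1 \<noteq> z2"
  shows "affine_interp z1 w1 z2 w2 z1 = w1"
  using assms by (simp add: affine_interp_def)

theorem mainTheorem3:
  fixes eps x0 alpha :: real
  assumes "eps > 0" and "0 \<le> x0" and "x0 < 1/4"
    and "eps^2 / (1/4 - eps^2 * x0) < 1"
    and "alpha > 0"
  shows "\<forall>theta::real.
     ell_t eps x0 alpha theta (qpoly (Ccal eps x0 (frac_part (2 * theta))) (gamma_t eps x0 theta))
       = gamma_t eps x0 (theta + alpha/2)"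
proof
  fix theta :: real
  have "gamma_t eps x0 theta \<noteq> 1/2"
    using assms(1-3) by (intro gamma_t_ne_half) auto
  then have "gamma_t eps x0 theta \<noteq> gamma_t eps x0 (theta + 1/2)"
    unfolding gamma_t_antipodal by (auto simp: field_simps)
  then show "ell_t eps x0 alpha theta
      (qpoly (Ccal eps x0 (frac_part (2 * theta))) (gamma_t eps x0 theta))
    = gamma_t eps x0 (theta + alpha/2)"
    unfolding Ccal_frac_part gamma_t_fixed_point ell_t_def by (rule affine_interp_first)
qed

end
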